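(* Let $\psi$ be a pure state with Hamiltonian $H$ having period $\tau>0$, i.e. $\tau=\inf\{t>0:|\langle\psi|e^{-iHt}|\psi\rangle|=1\}$, with energy reference chosen so that $e^{-iH\tau}|\psi\rangle=|\psi\rangle$. Let $p_\psi(n)=\frac1{2\pi}\int_0^{2\pi}e^{i\theta n}\langle\psi|e^{-iH\tau\theta/2\pi}|\psi\rangle d\theta$, $n\in\mathbb Z$ (the probability that $\psi$ has energy $2\pi n/\tau$), and assume $H$ is bounded below. Then there exists a finite integer $L\ge1$ such that the $L$-fold convolution $p_{\psi^{\otimes L}}=p_\psi*\cdots*p_\psi$ satisfies $$\tfrac12\sum_{n\in\mathbb Z}|p_{\psi^{\otimes L}}(n)-p_{\psi^{\otimes L}}(n+1)|<1.$$
   Context: The distribution $p_{\psi^{\otimes L}}$ is the energy distribution of $\psi^{\otimes L}$ with respect to the non-interacting total Hamiltonian $\sum_{i=1}^L I^{\otimes(i-1)}\otimes H\otimes I^{\otimes(L-i)}$ (in units of $2\pi/\tau$). *)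

theory Defs
  imports "HOL-Probability.Probability"
begin

text \<open>A pure state psi together with its Hamiltonian H is represented by the spectral
  (energy) measure mu of H in the state psi: a Borel probability measure on the reals.\<close>

definition overlap :: "real measure \<Rightarrow> real \<Rightarrow> complex" where
  "overlap \<mu> t = integral\<^sup>L \<mu> (\<lambda>E. cis (- (E * t)))"

definition energy_dist :: "real measure \<Rightarrow> real \<Rightarrow> int \<Rightarrow> complex" where
  "energy_dist \<mu> \<tau> n =
     complex_of_real (1 / (2 * pi)) *
       integral {0..2*pi} (\<lambda>\<theta>. cis (\<theta> * of_int n) * overlap \<mu> (\<tau> * \<theta> / (2 * pi)))"

definition int_conv :: "(int \<Rightarrow> complex) \<Rightarrow> (int \<Rightarrow> complex) \<Rightarrow> int \<Rightarrow> complex" where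
  "int_conv f g n = (\<Sum>\<^sub>\<infinity>k\<in>UNIV. f k * g (n - k))"

fun conv_power :: "(int \<Rightarrow> complex) \<Rightarrow> nat \<Rightarrow> int \<Rightarrow> complex" where
  "conv_power f 0 = (\<lambda>n. if n = 0 then 1 else 0)"
| "conv_power f (Suc L) = int_conv f (conv_power f L)"

end

theory Submission
  imports Defs
begin

text \<open>
  Since the overlap at the period equals 1, the energy measure is concentrated on the lattice
  (2 pi / tau) Z, and Fubini together with the orthogonality of the characters
  theta -> e^(i k theta) on [0, 2 pi] identifies p_psi(n) with the mass of the lattice point
  2 pi n / tau. Minimality of tau says that the support of p_psi lies in no coset a + d Z with
  d >= 2, for otherwise the overlap would already have modulus 1 at tau / d. Hence the
  differences of L-fold sums of support points generate Z, so for some L two neighbours n0 and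
  n0 + 1 both carry positive mass under the L-fold convolution P, and then
  sum_n |P n - P (n + 1)| <= 2 - 2 min (P n0) (P (n0 + 1)) < 2.
\<close>

section \<open>The energy distribution of a periodic state\<close>

lemma borel_measurable_cis [measurable]: "cis \<in> borel_measurable borel"
  by (intro borel_measurable_continuous_onI continuous_intros)

lemma overlap_eq_1_imp_AE_lattice:
  assumes "prob_space \<mu>" "sets \<mu> = sets borel" "overlap \<mu> \<tau> = 1"
  shows "AE E in \<mu>. \<exists>m::int. E * \<tau> = 2 * pi * m"
proof -
  interpret prob_space \<mu> by fact
  note [measurable_cong] = assms(2)
  have integrable_phase: "integrable \<mu> (\<lambda>E. cis (- (E * \<tau>)))"
    by (intro integrable_const_bound[where B=1]) auto
  have "integral\<^sup>L \<mu> (\<lambda>E. cos (E * \<tau>)) = 1"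
    using integral_Re[OF integrable_phase] assms(3) by (simp add: overlap_def)
  then have "integral\<^sup>L \<mu> (\<lambda>E. 1 - cos (E * \<tau>)) = 0"
    using integrable_Re[OF integrable_phase] by (simp add: prob_space)
  then have "AE E in \<mu>. 1 - cos (E * \<tau>) = 0"
    using integrable_Re[OF integrable_phase]
    by (subst (asm) integral_nonneg_eq_0_iff_AE) auto
  then show ?thesis
  proof (rule eventually_mono)
    fix E assume "1 - cos (E * \<tau>) = 0"
    then obtain m :: int where "E * \<tau> = m * 2 * pi" using cos_one_2pi_int by auto
    then show "\<exists>m::int. E * \<tau> = 2 * pi * m" by (auto simp: mult_ac)
  qed
qed

lemma AE_lattice_atoms:
  assumes "prob_space \<mu>" "sets \<mu> = sets borel" "\<tau> \<noteq> 0"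
    and lattice: "AE E in \<mu>. \<exists>m::int. E * \<tau> = 2 * pi * m"
  shows "AE E in \<mu>. \<exists>m::int. E * \<tau> = 2 * pi * m \<and> measure \<mu> {E} > 0"
proof -
  interpret prob_space \<mu> by fact
  have "(\<Union>E\<in>{E. measure \<mu> {E} = 0 \<and> (\<exists>m::int. E * \<tau> = 2 * pi * m)}. {E}) \<in> null_sets \<mu>"
  proof (rule null_sets_UN')
    show "countable {E. measure \<mu> {E} = 0 \<and> (\<exists>m::int. E * \<tau> = 2 * pi * m)}"
    proof (rule countable_subset)
      show "countable (range (\<lambda>m::int. 2 * pi * m / \<tau>))" by simp
    qed (use \<open>\<tau> \<noteq> 0\<close> in \<open>auto simp: field_simps\<close>)
  qed (use assms(2) in \<open>auto simp: null_sets_def emeasure_eq_measure\<close>)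
  from AE_not_in[OF this] lattice show ?thesis
    by eventually_elim (use measure_nonneg[of \<mu>] in \<open>force simp: order_le_neq_trans\<close>)
qed

lemma minimal_period_support_not_in_coset:
  fixes d a :: int
  assumes "prob_space \<mu>" "sets \<mu> = sets borel" "\<tau> > 0"
    and minimal: "\<tau> = Inf {t. t > 0 \<and> cmod (overlap \<mu> t) = 1}"
    and lattice: "AE E in \<mu>. \<exists>m::int. E * \<tau> = 2 * pi * m"
    and "d \<ge> 2"
  shows "\<exists>n. measure \<mu> {2 * pi * of_int n / \<tau>} > 0 \<and> \<not> d dvd (n - a)"
proof (rule ccontr)
  interpret prob_space \<mu> by fact
  note [measurable_cong] = assms(2)
  assume "\<not> ?thesis"
  then have coset: "d dvd (n - a)" if "measure \<mu> {2 * pi * of_int n / \<tau>} > 0" for n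
    using that by blast
  have "AE E in \<mu>. \<exists>m::int. E * \<tau> = 2 * pi * m \<and> measure \<mu> {E} > 0"
    using AE_lattice_atoms[OF assms(1,2) _ lattice] \<open>\<tau> > 0\<close> by simp
  then have "AE E in \<mu>. cis (- (E * (\<tau> / d))) = cis (- (2 * pi * a / d))"
  proof eventually_elim
    case (elim E)
    then obtain m :: int where m: "E * \<tau> = 2 * pi * m" and "measure \<mu> {E} > 0" by auto
    moreover have "E = 2 * pi * of_int m / \<tau>" using m \<open>\<tau> > 0\<close> by (simp add: field_simps)
    ultimately have "d dvd m - a" by (intro coset) simp
    then obtain j where "m - a = d * j" by (elim dvdE)
    then have j: "m = a + d * j" by simp
    have "E * (\<tau> / d) = 2 * pi * m / d" using m by simp
    also have "\<dots> = 2 * pi * a / d + 2 * pi * j"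
      using \<open>d \<ge> 2\<close> by (simp add: j field_simps)
    finally have "cis (- (E * (\<tau> / d))) = cis (- (2 * pi * a / d)) * cis (- (2 * pi * j))"
      by (simp add: cis_mult)
    then show ?case using cis_multiple_2pi[of "of_int (- j)"] by simp
  qed
  then have "overlap \<mu> (\<tau> / d) = (\<integral>E. cis (- (2 * pi * a / d)) \<partial>\<mu>)"
    unfolding overlap_def by (intro integral_cong_AE) auto
  then have "\<tau> / d \<in> {t. t > 0 \<and> cmod (overlap \<mu> t) = 1}"
    using \<open>\<tau> > 0\<close> \<open>d \<ge> 2\<close> by (simp add: prob_space)
  then have "\<tau> \<le> \<tau> / d"
    unfolding minimal by (rule cInf_lower) (auto intro: bdd_belowI[where m=0])
  moreover have "\<tau> / d < \<tau>"
    using \<open>\<tau> > 0\<close> \<open>d \<ge> 2\<close> by (simp add: divide_less_eq)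
  ultimately show False by simp
qed

lemma integral_cis_int_multiple:
  fixes k :: int
  shows "integral {0..2*pi} (\<lambda>\<theta>. cis (\<theta> * of_int k)) = (if k = 0 then 2 * pi else 0)"
proof (cases "k = 0")
  case True
  then show ?thesis by (simp add: scaleR_conv_of_real)
next
  case False
  define c where "c = \<i> * of_int k"
  have "c \<noteq> 0" using False by (simp add: c_def)
  have cis_eq_exp: "cis (\<theta> * of_int k) = exp (c * \<theta>)" for \<theta>
    by (simp add: cis_conv_exp c_def mult_ac)
  have antiderivative: "((\<lambda>\<theta>. exp (c * \<theta>) / c) has_vector_derivative exp (c * x))
      (at x within {0..2*pi})" for x
    using \<open>c \<noteq> 0\<close>
    by (intro has_vector_derivative_real_field) (auto intro!: derivative_eq_intros)
  have "((\<lambda>\<theta>. exp (c * \<theta>)) has_integral (exp (c * (2 * pi)) / c - exp (c * of_real 0) / c)) {0..2*pi}"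
    by (rule fundamental_theorem_of_calculus) (auto intro: antiderivative)
  moreover have "exp (c * (2 * pi)) = 1"
    using cis_eq_exp[of "2 * pi"] cis_multiple_2pi[of "of_int k"] by (simp add: mult_ac)
  ultimately have "((\<lambda>\<theta>. cis (\<theta> * of_int k)) has_integral 0) {0..2*pi}"
    by (simp add: cis_eq_exp)
  then show ?thesis using False by (simp add: integral_unique)
qed

lemma lattice_phase_integral:
  fixes m n :: int
  assumes "\<tau> \<noteq> 0" and lattice: "E * \<tau> = 2 * pi * m"
  shows "(\<integral>\<theta>. indicator {0..2*pi} \<theta> *\<^sub>R
              (cis (\<theta> * of_int n) * cis (- (E * (\<tau> * \<theta> / (2 * pi))))) \<partial>lborel)
    = complex_of_real (2 * pi * indicator {2 * pi * of_int n / \<tau>} E)"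
proof -
  have phase: "cis (\<theta> * of_int n) * cis (- (E * (\<tau> * \<theta> / (2 * pi)))) = cis (\<theta> * of_int (n - m))" for \<theta>
  proof -
    have "E * (\<tau> * \<theta> / (2 * pi)) = \<theta> * m" using lattice by (simp add: field_simps)
    then show ?thesis by (simp add: cis_mult algebra_simps)
  qed
  have "set_integrable lborel {0..2*pi} (\<lambda>\<theta>. cis (\<theta> * of_int (n - m)))"
    by (intro borel_integrable_atLeastAtMost' continuous_intros)
  then have "(\<integral>\<theta>. indicator {0..2*pi} \<theta> *\<^sub>R cis (\<theta> * of_int (n - m)) \<partial>lborel)
      = integral {0..2*pi} (\<lambda>\<theta>. cis (\<theta> * of_int (n - m)))"
    using set_borel_integral_eq_integral(2) by (simp add: set_lebesgue_integral_def)
  also have "\<dots> = complex_of_real (if n = m then 2 * pi else 0)"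
    using integral_cis_int_multiple[of "n - m"] by simp
  also have "n = m \<longleftrightarrow> E = 2 * pi * of_int n / \<tau>"
    using lattice \<open>\<tau> \<noteq> 0\<close> by (auto simp: field_simps)
  finally show ?thesis
    by (simp only: phase) (simp add: indicator_def)
qed

lemma energy_dist_eq_measure_lattice_point:
  assumes "prob_space \<mu>" "sets \<mu> = sets borel" "\<tau> \<noteq> 0"
    and lattice: "AE E in \<mu>. \<exists>m::int. E * \<tau> = 2 * pi * m"
  shows "energy_dist \<mu> \<tau> n = complex_of_real (measure \<mu> {2 * pi * of_int n / \<tau>})"
proof -
  interpret prob_space \<mu> by fact
  interpret P: pair_sigma_finite lborel \<mu> ..
  note [measurable_cong] = assms(2)
  define f where "f \<theta> E =
      indicator {0..2*pi} \<theta> *\<^sub>R (cis (\<theta> * of_int n) * cis (- (E * (\<tau> * \<theta> / (2 * pi)))))" for \<theta> E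
  define g where "g \<theta> = cis (\<theta> * of_int n) * overlap \<mu> (\<tau> * \<theta> / (2 * pi))" for \<theta>
  have f_measurable: "case_prod f \<in> borel_measurable (lborel \<Otimes>\<^sub>M \<mu>)"
    unfolding f_def by measurable
  have f_integrable: "integrable (lborel \<Otimes>\<^sub>M \<mu>) (case_prod f)"
  proof (rule integrableI_bounded_set[where A="{0..2*pi} \<times> space \<mu>" and B=1])
    show "emeasure (lborel \<Otimes>\<^sub>M \<mu>) ({0..2*pi} \<times> space \<mu>) < \<infinity>"
      by (subst emeasure_pair_measure_Times) (auto simp: ennreal_mult_less_top emeasure_space_1)
  qed (auto simp: f_def norm_mult space_pair_measure f_measurable intro!: AE_I2
        split: split_indicator split_indicator_asm)
  have integral_E: "(\<integral>E. f \<theta> E \<partial>\<mu>) = indicator {0..2*pi} \<theta> *\<^sub>R g \<theta>" for \<theta>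
    by (simp add: f_def g_def overlap_def)
  have integral_\<theta>: "AE E in \<mu>.
      (\<integral>\<theta>. f \<theta> E \<partial>lborel) = complex_of_real (2 * pi * indicator {2 * pi * of_int n / \<tau>} E)"
    using lattice by eventually_elim (clarify, simp only: f_def lattice_phase_integral[OF \<open>\<tau> \<noteq> 0\<close>])
  have "set_integrable lborel {0..2*pi} g"
    using P.integrable_fst[OF f_integrable] by (simp add: set_integrable_def integral_E)
  have "complex_of_real (2 * pi * measure \<mu> {2 * pi * of_int n / \<tau>})
      = (\<integral>E. complex_of_real (2 * pi * indicator {2 * pi * of_int n / \<tau>} E) \<partial>\<mu>)"
    using assms(2) by (simp add: sets_eq_imp_space_eq)
  also have "\<dots> = (\<integral>E. (\<integral>\<theta>. f \<theta> E \<partial>lborel) \<partial>\<mu>)"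
    using integral_\<theta> f_measurable by (intro integral_cong_AE) auto
  also have "\<dots> = (\<integral>\<theta>. (\<integral>E. f \<theta> E \<partial>\<mu>) \<partial>lborel)"
    using f_integrable by (intro P.Fubini_integral) simp
  also have "\<dots> = integral {0..2*pi} g"
    using set_borel_integral_eq_integral(2)[OF \<open>set_integrable lborel {0..2*pi} g\<close>]
    by (simp add: integral_E set_lebesgue_integral_def)
  finally have "integral {0..2*pi} g = complex_of_real (2 * pi * measure \<mu> {2 * pi * of_int n / \<tau>})"
    by (rule sym)
  then show ?thesis
    by (simp add: energy_dist_def g_def[abs_def])
qed

section \<open>Convolution powers of subprobability weights on the integers\<close>

lemma has_sum_sum:
  fixes f :: "'i \<Rightarrow> 'a \<Rightarrow> 'b::topological_comm_monoid_add"
  assumes "finite I" "\<And>i. i \<in> I \<Longrightarrow> (f i has_sum s i) A"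
  shows "((\<lambda>x. \<Sum>i\<in>I. f i x) has_sum (\<Sum>i\<in>I. s i)) A"
  using assms by (induction I rule: finite_induct) (auto intro: has_sum_add)

definition subprob_weights :: "('a \<Rightarrow> real) \<Rightarrow> bool" where
  "subprob_weights w \<longleftrightarrow> (\<forall>x. 0 \<le> w x) \<and> (\<forall>F. finite F \<longrightarrow> sum w F \<le> 1)"

lemma subprob_weightsI:
  "(\<And>x. 0 \<le> w x) \<Longrightarrow> (\<And>F. finite F \<Longrightarrow> sum w F \<le> 1) \<Longrightarrow> subprob_weights w"
  by (simp add: subprob_weights_def)

lemma subprob_weights_nonneg: "subprob_weights w \<Longrightarrow> 0 \<le> w x"
  by (simp add: subprob_weights_def)

lemma subprob_weights_sum_le_1: "subprob_weights w \<Longrightarrow> finite F \<Longrightarrow> sum w F \<le> 1"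
  by (simp add: subprob_weights_def)

lemma subprob_weights_le_1: "subprob_weights w \<Longrightarrow> w x \<le> 1"
  using subprob_weights_sum_le_1[of w "{x}"] by simp

lemma subprob_weights_reindex:
  fixes w :: "'a \<Rightarrow> real" and h :: "'b \<Rightarrow> 'a"
  assumes "subprob_weights w" "inj h"
  shows "subprob_weights (\<lambda>x. w (h x))"
proof (rule subprob_weightsI)
  fix F :: "'b set" assume "finite F"
  then have "(\<Sum>x\<in>F. w (h x)) = sum w (h ` F)"
    using \<open>inj h\<close> by (simp add: sum.reindex inj_on_subset)
  also have "\<dots> \<le> 1" using assms \<open>finite F\<close> by (simp add: subprob_weights_sum_le_1)
  finally show "(\<Sum>x\<in>F. w (h x)) \<le> 1" .
qed (use assms in \<open>simp add: subprob_weights_nonneg\<close>)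

lemma subprob_weights_measure_singleton:
  fixes h :: "'b \<Rightarrow> 'a"
  assumes "prob_space \<mu>" "inj h" "\<And>x. {h x} \<in> sets \<mu>"
  shows "subprob_weights (\<lambda>x. measure \<mu> {h x})"
proof (rule subprob_weightsI)
  interpret prob_space \<mu> by fact
  fix F :: "'b set" assume "finite F"
  then have "(\<Sum>x\<in>F. measure \<mu> {h x}) = measure \<mu> (h ` F)"
    using assms(2,3) by (subst finite_measure_eq_sum_singleton) (auto simp: sum.reindex inj_on_subset)
  also have "\<dots> \<le> 1" by simp
  finally show "(\<Sum>x\<in>F. measure \<mu> {h x}) \<le> 1" .
qed simp

definition real_conv :: "(int \<Rightarrow> real) \<Rightarrow> (int \<Rightarrow> real) \<Rightarrow> int \<Rightarrow> real" where
  "real_conv w v n = (\<Sum>\<^sub>\<infinity>k. w k * v (n - k))"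

lemma summable_on_conv:
  fixes w v :: "int \<Rightarrow> real"
  assumes "subprob_weights w" "subprob_weights v"
  shows "(\<lambda>k. w k * v (n - k)) summable_on UNIV"
proof (rule nonneg_bdd_above_summable_on)
  show "bdd_above (sum (\<lambda>k. w k * v (n - k)) ` {F. F \<subseteq> UNIV \<and> finite F})"
  proof (rule bdd_aboveI[where M=1], clarsimp)
    fix F :: "int set" assume "finite F"
    have "(\<Sum>k\<in>F. w k * v (n - k)) \<le> sum w F"
      using assms by (intro sum_mono mult_right_le_one_le) (auto intro: subprob_weights_nonneg subprob_weights_le_1)
    also have "\<dots> \<le> 1" using assms(1) \<open>finite F\<close> by (rule subprob_weights_sum_le_1)
    finally show "(\<Sum>k\<in>F. w k * v (n - k)) \<le> 1" .
  qed
qed (use assms in \<open>simp add: subprob_weights_nonneg\<close>)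

lemma subprob_weights_real_conv:
  assumes "subprob_weights w" "subprob_weights v"
  shows "subprob_weights (real_conv w v)"
proof (rule subprob_weightsI)
  show "0 \<le> real_conv w v n" for n
    using assms by (simp add: real_conv_def infsum_nonneg subprob_weights_nonneg)
  fix F :: "int set" assume "finite F"
  have "((\<lambda>k. \<Sum>n\<in>F. w k * v (n - k)) has_sum sum (real_conv w v) F) UNIV"
    unfolding real_conv_def using \<open>finite F\<close> summable_on_conv[OF assms]
    by (intro has_sum_sum) auto
  then show "sum (real_conv w v) F \<le> 1"
  proof (rule has_sum_le_finite_sums)
    fix K :: "int set" assume "finite K"
    have "(\<Sum>k\<in>K. \<Sum>n\<in>F. w k * v (n - k)) = (\<Sum>k\<in>K. w k * (\<Sum>n\<in>F. v (n + - k)))"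
      by (simp add: sum_distrib_left)
    also have "\<dots> \<le> sum w K"
      using assms \<open>finite F\<close> subprob_weights_reindex[OF assms(2), of "\<lambda>n. n + - k" for k]
      by (intro sum_mono mult_right_le_one_le)
         (auto simp: subprob_weights_nonneg subprob_weights_sum_le_1 sum_nonneg inj_on_def)
    also have "\<dots> \<le> 1" using assms(1) \<open>finite K\<close> by (rule subprob_weights_sum_le_1)
    finally show "(\<Sum>k\<in>K. \<Sum>n\<in>F. w k * v (n - k)) \<le> 1" .
  qed
qed

fun real_conv_power :: "(int \<Rightarrow> real) \<Rightarrow> nat \<Rightarrow> int \<Rightarrow> real" where
  "real_conv_power w 0 = (\<lambda>n. if n = 0 then 1 else 0)"
| "real_conv_power w (Suc L) = real_conv w (real_conv_power w L)"

lemma subprob_weights_real_conv_power: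
  "subprob_weights w \<Longrightarrow> subprob_weights (real_conv_power w L)"
proof (induction L)
  case 0
  show ?case
    by (rule subprob_weightsI) (simp_all add: sum.If_cases)
qed (simp add: subprob_weights_real_conv)

lemma conv_power_of_real:
  assumes "subprob_weights w"
  shows "conv_power (\<lambda>n. complex_of_real (w n)) L = (\<lambda>n. complex_of_real (real_conv_power w L n))"
proof (induction L)
  case (Suc L)
  have "((\<lambda>k. complex_of_real (w k * real_conv_power w L (n - k))) has_sum
      complex_of_real (real_conv w (real_conv_power w L) n)) UNIV" for n
    unfolding real_conv_def
    using assms subprob_weights_real_conv_power[OF assms]
    by (intro has_sum_of_real has_sum_infsum summable_on_conv)
  then show ?case
    by (auto simp: int_conv_def Suc intro!: infsumI)
qed (simp add: fun_eq_iff)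

section \<open>Aperiodic sets and neighbouring points in their sumsets\<close>

fun sumset_power :: "int set \<Rightarrow> nat \<Rightarrow> int set" where
  "sumset_power S 0 = {0}"
| "sumset_power S (Suc L) = {k + r | k r. k \<in> S \<and> r \<in> sumset_power S L}"

lemma sumset_power_add:
  "u \<in> sumset_power S L \<Longrightarrow> v \<in> sumset_power S L' \<Longrightarrow> u + v \<in> sumset_power S (L + L')"
proof (induction L arbitrary: u)
  case (Suc L)
  then obtain k r where "u = k + r" "k \<in> S" "r \<in> sumset_power S L" by auto
  then have "k + (r + v) \<in> sumset_power S (Suc (L + L'))"
    using Suc.IH[of r] Suc.prems(2) by auto
  then show ?case using \<open>u = k + r\<close> by (simp add: add.assoc)
qed simp

lemma int_subgroup_principal:
  fixes T :: "int set"
  assumes "0 \<in> T" and diff_closed: "\<And>s t. s \<in> T \<Longrightarrow> t \<in> T \<Longrightarrow> s - t \<in> T"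
  shows "\<exists>d\<ge>0. d \<in> T \<and> (\<forall>t\<in>T. d dvd t)"
proof (cases "T \<subseteq> {0}")
  case True
  then show ?thesis using \<open>0 \<in> T\<close> by auto
next
  case False
  have add_closed: "s + t \<in> T" if "s \<in> T" "t \<in> T" for s t
    using diff_closed[OF that(1) diff_closed[OF \<open>0 \<in> T\<close> that(2)]] by simp
  have mult_closed: "q * t \<in> T" if "t \<in> T" for q t
  proof (induction q rule: int_induct[where k=0])
    case (step1 i)
    then show ?case using add_closed[OF _ that] by (simp add: distrib_right)
  next
    case (step2 i)
    then show ?case using diff_closed[OF _ that] by (simp add: left_diff_distrib)
  qed (use \<open>0 \<in> T\<close> in simp)
  from False obtain t where "t \<in> T" "t \<noteq> 0" by auto
  moreover have "\<bar>t\<bar> \<in> T"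
    using mult_closed[OF \<open>t \<in> T\<close>, of "sgn t"] by (simp add: abs_sgn mult.commute)
  ultimately have "\<exists>k::nat. k > 0 \<and> int k \<in> T"
    by (intro exI[of _ "nat \<bar>t\<bar>"]) simp
  define d where "d = (LEAST k::nat. k > 0 \<and> int k \<in> T)"
  have d: "d > 0" "int d \<in> T"
    using LeastI_ex[OF \<open>\<exists>k::nat. k > 0 \<and> int k \<in> T\<close>] by (simp_all add: d_def)
  have "int d dvd t" if "t \<in> T" for t
  proof (rule ccontr)
    assume "\<not> int d dvd t"
    then have "t mod int d > 0" using d(1) by (simp add: dvd_eq_mod_eq_0 order_le_neq_trans)
    moreover have "t mod int d < int d" using d(1) by simp
    moreover have "t mod int d \<in> T"
      using diff_closed[OF that mult_closed[OF d(2), of "t div int d"]] by (simp add: minus_div_mult_eq_mod)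
    ultimately show False
      using Least_le[of "\<lambda>k. k > 0 \<and> int k \<in> T" "nat (t mod int d)"]
      by (simp add: d_def[symmetric] le_nat_iff)
  qed
  then show ?thesis using d by (intro exI[of _ "int d"]) auto
qed

lemma consecutive_in_sumset_power:
  fixes S :: "int set"
  assumes aperiodic: "\<And>d a. d \<ge> 2 \<Longrightarrow> \<exists>n\<in>S. \<not> d dvd (n - a)"
  shows "\<exists>L n. n \<in> sumset_power S L \<and> n + 1 \<in> sumset_power S L"
proof -
  define T where "T = {u - v | u v L. u \<in> sumset_power S L \<and> v \<in> sumset_power S L}"
  have "0 \<in> T" unfolding T_def by (auto intro!: exI[where x=0])
  moreover have "s - t \<in> T" if s: "s \<in> T" and t: "t \<in> T" for s t
  proof -
    obtain u v L u' v' L' where "s = u - v" "u \<in> sumset_power S L" "v \<in> sumset_power S L"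
      and "t = u' - v'" "u' \<in> sumset_power S L'" "v' \<in> sumset_power S L'"
      using s t unfolding T_def by blast
    then have "u + v' \<in> sumset_power S (L + L')" "v + u' \<in> sumset_power S (L + L')"
      "s - t = (u + v') - (v + u')"
      by (simp_all add: sumset_power_add)
    then show ?thesis unfolding T_def by blast
  qed
  ultimately obtain d where "d \<ge> 0" "d \<in> T" and d_dvd: "\<forall>t\<in>T. d dvd t"
    using int_subgroup_principal by blast
  obtain a where "a \<in> S" using aperiodic[of 2 0] by auto
  have S_coset: "d dvd n - a" if "n \<in> S" for n
  proof -
    have "n \<in> sumset_power S 1" "a \<in> sumset_power S 1" using that \<open>a \<in> S\<close> by auto
    then show ?thesis using d_dvd unfolding T_def by blast
  qed
  have "d = 1"
  proof (rule ccontr)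
    assume "d \<noteq> 1"
    define d' where "d' = (if d = 0 then 2 else d)"
    have "d' \<ge> 2" using \<open>d \<ge> 0\<close> \<open>d \<noteq> 1\<close> by (simp add: d'_def)
    moreover have "d' dvd n - a" if "n \<in> S" for n
      using S_coset[OF that] by (auto simp: d'_def)
    ultimately show False using aperiodic by blast
  qed
  then obtain u v L where "u \<in> sumset_power S L" "v \<in> sumset_power S L" "1 = u - v"
    using \<open>d \<in> T\<close> unfolding T_def by blast
  then have "v + 1 \<in> sumset_power S L" by (simp add: algebra_simps)
  with \<open>v \<in> sumset_power S L\<close> show ?thesis by blast
qed

section \<open>Distance between a convolution power and its shift\<close>

lemma real_conv_power_pos:
  assumes "subprob_weights w" "n \<in> sumset_power {k. w k > 0} L"
  shows "real_conv_power w L n > 0"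
  using assms(2)
proof (induction L arbitrary: n)
  case (Suc L)
  then obtain k r where "n = k + r" "w k > 0" "r \<in> sumset_power {k. w k > 0} L" by auto
  with Suc.IH have "w k * real_conv_power w L (n - k) > 0" by simp
  also have "\<dots> \<le> real_conv w (real_conv_power w L) n"
    unfolding real_conv_def using assms(1) subprob_weights_real_conv_power[OF assms(1)]
    by (intro infsum_mono_neutral[where A="{k}", simplified])
       (auto intro: summable_on_conv mult_nonneg_nonneg subprob_weights_nonneg)
  finally show ?case by simp
qed simp

lemma subprob_weights_shift_distance_lt_2:
  fixes q :: "int \<Rightarrow> real"
  assumes q: "subprob_weights q" and "q n0 > 0" "q (n0 + 1) > 0"
  shows "(\<lambda>n. \<bar>q n - q (n + 1)\<bar>) summable_on UNIV \<and> (\<Sum>\<^sub>\<infinity>n. \<bar>q n - q (n + 1)\<bar>) < 2"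
proof -
  define m where "m = min (q n0) (q (n0 + 1))"
  have "subprob_weights (\<lambda>n. q (n + 1))"
    using q by (rule subprob_weights_reindex) (simp add: inj_def)
  have abs_diff: "\<bar>x - y\<bar> = x + y - 2 * min x y" for x y :: real
    by (simp add: abs_if min_def)
  have bound: "(\<Sum>n\<in>F. \<bar>q n - q (n + 1)\<bar>) \<le> 2 - 2 * m" if "finite F" for F
  proof -
    define G where "G = insert n0 F"
    have "finite G" "n0 \<in> G" using \<open>finite F\<close> by (simp_all add: G_def)
    have "(\<Sum>n\<in>F. \<bar>q n - q (n + 1)\<bar>) \<le> (\<Sum>n\<in>G. \<bar>q n - q (n + 1)\<bar>)"
      using \<open>finite G\<close> by (intro sum_mono2) (auto simp: G_def)
    also have "\<dots> = (\<Sum>n\<in>G. q n) + (\<Sum>n\<in>G. q (n + 1)) - 2 * (\<Sum>n\<in>G. min (q n) (q (n + 1)))"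
      by (simp add: abs_diff sum.distrib sum_subtractf sum_distrib_left)
    also have "\<dots> \<le> 1 + 1 - 2 * m"
    proof -
      have "m \<le> (\<Sum>n\<in>G. min (q n) (q (n + 1)))"
        unfolding m_def using \<open>finite G\<close> \<open>n0 \<in> G\<close> q
        by (intro member_le_sum) (auto simp: subprob_weights_nonneg)
      then show ?thesis
        using q \<open>subprob_weights (\<lambda>n. q (n + 1))\<close> \<open>finite G\<close>
          subprob_weights_sum_le_1[of q G] subprob_weights_sum_le_1[of "\<lambda>n. q (n + 1)" G]
        by linarith
    qed
    finally show ?thesis by simp
  qed
  have summable: "(\<lambda>n. \<bar>q n - q (n + 1)\<bar>) summable_on UNIV"
    by (rule nonneg_bdd_above_summable_on) (auto intro!: bdd_aboveI[where M="2 - 2 * m"] bound)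
  then have "(\<Sum>\<^sub>\<infinity>n. \<bar>q n - q (n + 1)\<bar>) \<le> 2 - 2 * m"
    by (rule infsum_le_finite_sums) (rule bound)
  moreover have "m > 0" using assms by (simp add: m_def)
  ultimately show ?thesis using summable by simp
qed

lemma conv_power_shift_distance_lt_1:
  assumes w: "subprob_weights w"
    and aperiodic: "\<And>d a. d \<ge> 2 \<Longrightarrow> \<exists>n. w n > 0 \<and> \<not> d dvd (n - a)"
  shows "\<exists>L::nat. L \<ge> 1 \<and>
    (let P = conv_power (\<lambda>n. complex_of_real (w n)) L in
      (\<lambda>n. cmod (P n - P (n + 1))) summable_on (UNIV :: int set) \<and>
      (1/2) * (\<Sum>\<^sub>\<infinity>n\<in>(UNIV :: int set). cmod (P n - P (n + 1))) < 1)"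
proof -
  obtain L n0 where n0: "n0 \<in> sumset_power {n. w n > 0} L" "n0 + 1 \<in> sumset_power {n. w n > 0} L"
    using consecutive_in_sumset_power[of "{n. w n > 0}"] aperiodic by auto
  then have "L \<ge> 1" by (cases L) auto
  define q where "q = real_conv_power w L"
  have "(\<lambda>n. \<bar>q n - q (n + 1)\<bar>) summable_on UNIV \<and> (\<Sum>\<^sub>\<infinity>n. \<bar>q n - q (n + 1)\<bar>) < 2"
    unfolding q_def using w n0
    by (intro subprob_weights_shift_distance_lt_2 subprob_weights_real_conv_power real_conv_power_pos)
  then show ?thesis
    using \<open>L \<ge> 1\<close>
    by (intro exI[of _ L]) (simp add: Let_def conv_power_of_real[OF w] q_def flip: of_real_diff)
qed

theorem mainTheorem7:
  fixes \<mu> :: "real measure" and \<tau> :: real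
  assumes "prob_space \<mu>"
    and "sets \<mu> = sets borel"
    and "\<tau> > 0"
    and "\<tau> = Inf {t. t > 0 \<and> cmod (overlap \<mu> t) = 1}"
    and "overlap \<mu> \<tau> = 1"
    and "\<exists>c. AE E in \<mu>. c \<le> E"
  shows "\<exists>L::nat. L \<ge> 1 \<and>
    (let P = conv_power (energy_dist \<mu> \<tau>) L in
      (\<lambda>n. cmod (P n - P (n + 1))) summable_on (UNIV :: int set) \<and>
      (1/2) * (\<Sum>\<^sub>\<infinity>n\<in>(UNIV :: int set). cmod (P n - P (n + 1))) < 1)"
proof -
  have "\<tau> \<noteq> 0" using assms(3) by simp
  have lattice: "AE E in \<mu>. \<exists>m::int. E * \<tau> = 2 * pi * m"
    using overlap_eq_1_imp_AE_lattice[OF assms(1,2,5)] .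
  define w where "w n = measure \<mu> {2 * pi * of_int n / \<tau>}" for n
  have "energy_dist \<mu> \<tau> = (\<lambda>n. complex_of_real (w n))"
    using energy_dist_eq_measure_lattice_point[OF assms(1,2) \<open>\<tau> \<noteq> 0\<close> lattice]
    by (simp add: w_def fun_eq_iff)
  moreover have "subprob_weights w"
    unfolding w_def using assms(1,2) \<open>\<tau> \<noteq> 0\<close>
    by (intro subprob_weights_measure_singleton) (auto simp: inj_def)
  moreover have "\<exists>n. w n > 0 \<and> \<not> d dvd (n - a)" if "d \<ge> 2" for d a
    using minimal_period_support_not_in_coset[OF assms(1-4) lattice that] by (simp add: w_def)
  ultimately show ?thesis
    using conv_power_shift_distance_lt_1 by simp
qed

end
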